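(* Let $(B,\lfloor\cdot,\cdot\rfloor,\|\cdot\|)$ be an SSDB space with quadratic form $q$ and let $g_0(b)=\frac12\|b\|^2$. Then $\{x\in B: g_0(x)=q(x)\}+\{x\in B: g_0(x)=-q(x)\}=B.$
   Context: An SSD space is a pair $(B,\lfloor\cdot,\cdot\rfloor)$ with $B$ a nonzero real vector space and $\lfloor\cdot,\cdot\rfloor$ a symmetric bilinear form; $q(b)=\frac12\lfloor b,b\rfloor$. An SSDB space is a triple $(B,\lfloor\cdot,\cdot\rfloor,\|\cdot\|)$ such that $(B,\lfloor\cdot,\cdot\rfloor)$ is an SSD space, $(B,\|\cdot\|)$ is a Banach space, and the map $i:B\to B^*$, $i(b)=\lfloor\cdot,b\rfloor$, is a surjective isometry onto the dual $B^*$. *)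

theory Defs
  imports "HOL-Analysis.Analysis"
begin

definition SSD_space :: "('a::real_vector \<Rightarrow> 'a \<Rightarrow> real) \<Rightarrow> bool" where
  "SSD_space s \<longleftrightarrow> (\<exists>b::'a. b \<noteq> 0) \<and> bilinear s \<and> (\<forall>x y. s x y = s y x)"

text \<open>An SSDB space: the Banach space structure is the type class banach; the map
  i(b) = s(-,b) is a surjective isometry of B onto its dual B* (bounded linear
  functionals with the operator norm).\<close>
definition SSDB_space :: "('a::banach \<Rightarrow> 'a \<Rightarrow> real) \<Rightarrow> bool" where
  "SSDB_space s \<longleftrightarrow> SSD_space s
     \<and> (\<forall>b. bounded_linear (\<lambda>x. s x b) \<and> onorm (\<lambda>x. s x b) = norm b)
     \<and> (\<forall>f::'a \<Rightarrow> real. bounded_linear f \<longrightarrow> (\<exists>b. f = (\<lambda>x. s x b)))"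

definition quad_form :: "('a \<Rightarrow> 'a \<Rightarrow> real) \<Rightarrow> 'a \<Rightarrow> real" where
  "quad_form s b = s b b / 2"

definition g0 :: "'a::real_normed_vector \<Rightarrow> real" where
  "g0 b = (norm b)^2 / 2"

end

theory Submission
  imports Defs
begin

text \<open>Fix \<open>x\<close>. The function \<open>(a, u) \<mapsto> \<parallel>a\<parallel>\<^sup>2/2 + \<parallel>x - u\<parallel>\<^sup>2/2 - \<lfloor>x, u\<rfloor> + q(x)\<close> on \<open>B \<times> B\<close>
  is convex and, because \<open>\<bar>q(y)\<bar> \<le> \<parallel>y\<parallel>\<^sup>2/2\<close>, nonnegative on the diagonal. The algebraic
  Hahn--Banach theorem gives a linear functional below it vanishing on the diagonal, i.e. a
  linear \<open>l\<close> with \<open>l(a) - l(u)\<close> bounded by the function; \<open>l\<close> is then bounded, hence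
  \<open>l = \<lfloor>\<cdot>, b\<rfloor>\<close>. As \<open>i\<close> is an isometry, the Fenchel conjugate of \<open>\<parallel>\<cdot>\<parallel>\<^sup>2/2\<close> at
  \<open>\<lfloor>\<cdot>, w\<rfloor>\<close> is \<open>\<parallel>w\<parallel>\<^sup>2/2\<close>; taking the supremum over \<open>a\<close> and then over \<open>u\<close> yields
  \<open>(g\<^sub>0(b) - q(b)) + (g\<^sub>0(x - b) + q(x - b)) \<le> 0\<close>. Both brackets are nonnegative, so both
  vanish and \<open>x = b + (x - b)\<close> is the required decomposition.\<close>

lemma convex_on_compose_affine:
  assumes "convex_on UNIV f" and "linear g"
  shows "convex_on UNIV (\<lambda>x. f (g x + a))"
proof -
  have "g (u *\<^sub>R x + v *\<^sub>R y) + a = u *\<^sub>R (g x + a) + v *\<^sub>R (g y + a)" if "u + v = 1" for u v x y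
  proof -
    have "a = u *\<^sub>R a + v *\<^sub>R a" using that by (metis scaleR_left_distrib scaleR_one)
    then show ?thesis by (simp add: linear_add[OF assms(2)] linear_scale[OF assms(2)] algebra_simps)
  qed
  then show ?thesis using assms(1) by (simp add: convex_on_def)
qed

lemma convex_on_norm_power2: "convex_on UNIV (\<lambda>x::'a::real_normed_vector. (norm x)\<^sup>2)"
proof (rule convex_onI)
  fix t :: real and x y :: 'a
  assume t: "0 < t" "t < 1"
  have "norm ((1 - t) *\<^sub>R x + t *\<^sub>R y) \<le> (1 - t) * norm x + t * norm y"
    using norm_triangle_ineq[of "(1 - t) *\<^sub>R x" "t *\<^sub>R y"] t by simp
  then have "(norm ((1 - t) *\<^sub>R x + t *\<^sub>R y))\<^sup>2 \<le> ((1 - t) * norm x + t * norm y)\<^sup>2"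
    by (rule power_mono) simp
  also have "\<dots> \<le> (1 - t) * (norm x)\<^sup>2 + t * (norm y)\<^sup>2"
    using convex_onD[OF convex_power2, of t "norm x" "norm y"] t by simp
  finally show "(norm ((1 - t) *\<^sub>R x + t *\<^sub>R y))\<^sup>2 \<le> (1 - t) * (norm x)\<^sup>2 + t * (norm y)\<^sup>2" .
qed simp

text \<open>Partial linear functionals are handled through their graphs, so that their extensions
  are ordered by inclusion and Zorn's lemma applies.\<close>

definition linear_graph :: "('a::real_vector \<times> real) set \<Rightarrow> bool" where
  "linear_graph G \<longleftrightarrow> subspace G \<and> (\<forall>x r r'. (x, r) \<in> G \<longrightarrow> (x, r') \<in> G \<longrightarrow> r = r')"

lemma linear_graph_span_insert:
  assumes G: "linear_graph G" and z: "z \<notin> fst ` G"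
  shows "linear_graph (span (insert (z, c) G))"
  unfolding linear_graph_def
proof (intro conjI subspace_span allI impI)
  have sub: "subspace G" and fn: "\<And>x r r'. (x, r) \<in> G \<Longrightarrow> (x, r') \<in> G \<Longrightarrow> r = r'"
    using G unfolding linear_graph_def by blast+
  fix x r r' assume "(x, r) \<in> span (insert (z, c) G)" "(x, r') \<in> span (insert (z, c) G)"
  then obtain k k' where k: "(x - k *\<^sub>R z, r - k * c) \<in> G" and k': "(x - k' *\<^sub>R z, r' - k' * c) \<in> G"
    using sub by (auto simp: span_insert span_eq_iff[THEN iffD2, OF sub])
  have diff: "((k' - k) *\<^sub>R z, r - r' - (k - k') * c) \<in> G"
    using subspace_diff[OF sub k k'] by (simp add: algebra_simps)
  have "k = k'"
  proof (rule ccontr)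
    assume "k \<noteq> k'"
    then have "(z, (r - r' - (k - k') * c) / (k' - k)) \<in> G"
      using subspace_scale[OF sub diff, of "1 / (k' - k)"] by simp
    then show False using z by force
  qed
  then have "(0, r - r') \<in> G" using diff by simp
  moreover have "(0, 0) \<in> G" using subspace_0[OF sub] by (simp add: zero_prod_def)
  ultimately show "r = r'" using fn by fastforce
qed

lemma dominated_graph_slope_le:
  assumes \<Phi>: "convex_on UNIV \<Phi>" and G: "subspace G" and dom: "\<forall>(x, r) \<in> G. r \<le> \<Phi> x"
    and mr: "(m, r) \<in> G" and mr': "(m', r') \<in> G" and s: "0 < s" and t: "0 < t"
  shows "(r' - \<Phi> (m' - s *\<^sub>R z)) / s \<le> (\<Phi> (m + t *\<^sub>R z) - r) / t"
proof -
  define a where "a = s / (s + t)"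
  have a: "0 \<le> a" "a \<le> 1" "(s + t) * a = s" "(s + t) * (1 - a) = t"
    using s t by (auto simp: a_def field_simps)
  have "(1 - a) *\<^sub>R (m' - s *\<^sub>R z) + a *\<^sub>R (m + t *\<^sub>R z) = (1 - a) *\<^sub>R m' + a *\<^sub>R m"
  proof -
    have "a * t - (1 - a) * s = 0" using s t by (simp add: a_def field_simps)
    moreover have "(1 - a) *\<^sub>R (m' - s *\<^sub>R z) + a *\<^sub>R (m + t *\<^sub>R z)
        = (1 - a) *\<^sub>R m' + a *\<^sub>R m + (a * t - (1 - a) * s) *\<^sub>R z"
      by (simp add: algebra_simps)
    ultimately show ?thesis by simp
  qed
  moreover have "((1 - a) *\<^sub>R m' + a *\<^sub>R m, (1 - a) * r' + a * r) \<in> G"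
    using subspace_add[OF G subspace_scale[OF G mr', of "1 - a"] subspace_scale[OF G mr, of a]] by simp
  ultimately have "(1 - a) * r' + a * r \<le> \<Phi> ((1 - a) *\<^sub>R (m' - s *\<^sub>R z) + a *\<^sub>R (m + t *\<^sub>R z))"
    using dom by fastforce
  also have "\<dots> \<le> (1 - a) * \<Phi> (m' - s *\<^sub>R z) + a * \<Phi> (m + t *\<^sub>R z)"
    using convex_onD[OF \<Phi>] a by simp
  finally have "(s + t) * ((1 - a) * r' + a * r) \<le> (s + t) * ((1 - a) * \<Phi> (m' - s *\<^sub>R z) + a * \<Phi> (m + t *\<^sub>R z))"
    using s t by simp
  then have "t * (r' - \<Phi> (m' - s *\<^sub>R z)) \<le> s * (\<Phi> (m + t *\<^sub>R z) - r)"
    by (simp only: distrib_left mult.assoc[symmetric] a) (simp add: algebra_simps)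
  then show ?thesis using s t by (simp add: field_simps mult.commute)
qed

lemma dominated_graph_span_insert:
  assumes \<Phi>: "convex_on UNIV \<Phi>" and G: "subspace G" and dom: "\<forall>(x, r) \<in> G. r \<le> \<Phi> x"
  shows "\<exists>c. \<forall>(x, r) \<in> span (insert (z, c) G). r \<le> \<Phi> x"
proof -
  define L where "L = {(r - \<Phi> (m - s *\<^sub>R z)) / s | m r s. (m, r) \<in> G \<and> 0 < s}"
  define U where "U = {(\<Phi> (m + t *\<^sub>R z) - r) / t | m r t. (m, r) \<in> G \<and> 0 < t}"
  have inL: "(r - \<Phi> (m - s *\<^sub>R z)) / s \<in> L" if "(m, r) \<in> G" "0 < s" for m r s
    using that unfolding L_def by blast
  have inU: "(\<Phi> (m + t *\<^sub>R z) - r) / t \<in> U" if "(m, r) \<in> G" "0 < t" for m r t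
    using that unfolding U_def by blast
  have G0: "(0, 0) \<in> G" using subspace_0[OF G] by (simp add: zero_prod_def)
  have "l \<le> u" if "l \<in> L" "u \<in> U" for l u
    using that dominated_graph_slope_le[OF \<Phi> G dom] unfolding L_def U_def by blast
  with inL[OF G0, of 1] inU[OF G0, of 1]
  have L_le: "l \<le> Sup L" and le_U: "Sup L \<le> u" if "l \<in> L" "u \<in> U" for l u
    using that by (auto intro!: cSup_upper cSup_least bdd_aboveI)
  have "r \<le> \<Phi> x" if xr: "(x, r) \<in> span (insert (z, Sup L) G)" for x r
  proof -
    obtain k where "(x, r) - k *\<^sub>R (z, Sup L) \<in> G"
      using xr G by (auto simp: span_insert span_eq_iff[THEN iffD2, OF G])
    then have k: "(x - k *\<^sub>R z, r - k * Sup L) \<in> G" by simp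
    consider "k = 0" | "0 < k" | "k < 0" by linarith
    then show ?thesis
    proof cases
      case 1 then show ?thesis using k dom by fastforce
    next
      case 2
      have "Sup L \<le> (\<Phi> x - (r - k * Sup L)) / k"
        using le_U[OF inL[OF G0, of 1] inU[OF k 2]] by simp
      then show ?thesis using 2 by (simp add: field_simps)
    next
      case 3
      have "((r - k * Sup L) - \<Phi> x) / (- k) \<le> Sup L"
        using L_le[OF inL[OF k, of "- k"] inU[OF G0, of 1]] 3 by simp
      then show ?thesis using 3 by (simp add: field_simps)
    qed
  qed
  then show ?thesis by blast
qed

lemma linear_graph_Union_chain:
  assumes "\<C> \<noteq> {}" and "\<forall>G \<in> \<C>. linear_graph G" and chain: "\<forall>G \<in> \<C>. \<forall>H \<in> \<C>. G \<subseteq> H \<or> H \<subseteq> G"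
  shows "linear_graph (\<Union>\<C>)"
proof -
  have common: "\<exists>H \<in> \<C>. p \<in> H \<and> q \<in> H" if "p \<in> \<Union>\<C>" "q \<in> \<Union>\<C>" for p q
    using that chain by blast
  show ?thesis
    unfolding linear_graph_def subspace_def
  proof (intro conjI allI impI ballI)
    show "0 \<in> \<Union>\<C>" using assms(1,2) by (auto simp: linear_graph_def subspace_def)
    show "c *\<^sub>R p \<in> \<Union>\<C>" if "p \<in> \<Union>\<C>" for c p
      using that assms(2) by (auto simp: linear_graph_def subspace_def)
    show "p + q \<in> \<Union>\<C>" if pq: "p \<in> \<Union>\<C>" "q \<in> \<Union>\<C>" for p q
    proof -
      obtain H where "H \<in> \<C>" "p \<in> H" "q \<in> H" using common[OF pq] by blast
      then show ?thesis using assms(2) subspace_add unfolding linear_graph_def by blast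
    qed
    show "r = r'" if xr: "(x, r) \<in> \<Union>\<C>" "(x, r') \<in> \<Union>\<C>" for x r r'
    proof -
      obtain H where "H \<in> \<C>" "(x, r) \<in> H" "(x, r') \<in> H" using common[OF xr] by blast
      then show ?thesis using assms(2) unfolding linear_graph_def by blast
    qed
  qed
qed

lemma linear_graph_dominated_extension:
  assumes \<Phi>: "convex_on UNIV \<Phi>" and G: "linear_graph G" and dom: "\<forall>(x, r) \<in> G. r \<le> \<Phi> x"
  shows "\<exists>L. linear L \<and> (\<forall>x. L x \<le> \<Phi> x) \<and> (\<forall>(x, r) \<in> G. L x = r)"
proof -
  define \<A> where "\<A> = {H. G \<subseteq> H \<and> linear_graph H \<and> (\<forall>(x, r) \<in> H. r \<le> \<Phi> x)}"
  have "\<Union>\<C> \<in> \<A>" if ne: "\<C> \<noteq> {}" and "subset.chain \<A> \<C>" for \<C>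
  proof -
    have C: "\<C> \<subseteq> \<A>" and chain: "\<forall>G \<in> \<C>. \<forall>H \<in> \<C>. G \<subseteq> H \<or> H \<subseteq> G"
      using that(2) unfolding subset_chain_def by blast+
    then have "linear_graph (\<Union>\<C>)"
      using linear_graph_Union_chain[OF ne] unfolding \<A>_def by blast
    moreover have "G \<subseteq> \<Union>\<C>" using ne C unfolding \<A>_def by blast
    moreover have "\<forall>(x, r) \<in> \<Union>\<C>. r \<le> \<Phi> x" using C unfolding \<A>_def by blast
    ultimately show ?thesis unfolding \<A>_def by blast
  qed
  moreover have "G \<in> \<A>" using G dom unfolding \<A>_def by blast
  ultimately obtain M where "M \<in> \<A>" and max: "\<forall>H \<in> \<A>. M \<subseteq> H \<longrightarrow> H = M"
    using subset_Zorn_nonempty[of \<A>] by blast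
  then have GM: "G \<subseteq> M" and M: "linear_graph M" and domM: "\<forall>(x, r) \<in> M. r \<le> \<Phi> x"
    unfolding \<A>_def by blast+
  have sub: "subspace M" and fn: "\<And>x r r'. (x, r) \<in> M \<Longrightarrow> (x, r') \<in> M \<Longrightarrow> r = r'"
    using M unfolding linear_graph_def by blast+
  have total: "\<exists>r. (x, r) \<in> M" for x
  proof (rule ccontr)
    assume "\<nexists>r. (x, r) \<in> M"
    then have x: "x \<notin> fst ` M" by force
    obtain c where "\<forall>(y, r) \<in> span (insert (x, c) M). r \<le> \<Phi> y"
      using dominated_graph_span_insert[OF \<Phi> sub domM] by blast
    moreover have MM': "M \<subseteq> span (insert (x, c) M)"
      by (meson span_superset subset_insertI order_trans)
    ultimately have "span (insert (x, c) M) \<in> \<A>"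
      using GM linear_graph_span_insert[OF M x] unfolding \<A>_def by (intro CollectI conjI) auto
    with MM' have "span (insert (x, c) M) = M" using max by blast
    then show False using x span_base[of "(x, c)" "insert (x, c) M"] by force
  qed
  define L where "L x = (THE r. (x, r) \<in> M)" for x
  have L: "(x, r) \<in> M \<longleftrightarrow> r = L x" for x r
  proof -
    have "L x = r" if "(x, r) \<in> M" for r
      unfolding L_def by (rule the_equality) (use that fn in auto)
    then show ?thesis using total[of x] by blast
  qed
  have "linear L"
  proof (rule linearI)
    show "L (x + y) = L x + L y" for x y
      using subspace_add[OF sub, of "(x, L x)" "(y, L y)"] L by simp
    show "L (c *\<^sub>R x) = c *\<^sub>R L x" for c x
      using subspace_scale[OF sub, of "(x, L x)" c] L by simp
  qed
  moreover have "L x \<le> \<Phi> x" for x using domM L[of x "L x"] by blast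
  moreover have "L x = r" if "(x, r) \<in> G" for x r using that GM L[of x r] by auto
  ultimately show ?thesis by blast
qed

lemma convex_sandwich:
  fixes f g :: "'a::real_vector \<Rightarrow> real"
  assumes f: "convex_on UNIV f" and g: "convex_on UNIV g" and nonneg: "\<And>a. 0 \<le> f a + g a"
  shows "\<exists>l. linear l \<and> (\<forall>a u. l a - l u \<le> f a + g u)"
proof -
  define \<Phi> :: "'a \<times> 'a \<Rightarrow> real" where "\<Phi> = (\<lambda>p. f (fst p) + g (snd p))"
  have "linear (fst :: 'a \<times> 'a \<Rightarrow> 'a)" "linear (snd :: 'a \<times> 'a \<Rightarrow> 'a)"
    by (auto intro: linearI)
  then have "convex_on UNIV \<Phi>"
    using convex_on_add[OF convex_on_compose_affine[OF f, of fst 0] convex_on_compose_affine[OF g, of snd 0]]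
    by (simp add: \<Phi>_def)
  moreover define diag :: "'a \<Rightarrow> ('a \<times> 'a) \<times> real" where "diag a = ((a, a), 0)" for a
  have "linear diag" by (rule linearI) (simp_all add: diag_def)
  then have "subspace (range diag)" by (rule linear_subspace_image[OF _ subspace_UNIV])
  then have "linear_graph (range diag)" unfolding linear_graph_def by (auto simp: diag_def)
  moreover have "\<forall>(p, r) \<in> range diag. r \<le> \<Phi> p" using nonneg by (auto simp: diag_def \<Phi>_def)
  ultimately obtain L where L: "linear L" "\<And>p. L p \<le> \<Phi> p" "\<And>a. L (a, a) = 0"
    using linear_graph_dominated_extension[of \<Phi> "range diag"] by (auto simp: diag_def)
  define l where "l a = L (a, 0)" for a
  have "linear (\<lambda>a::'a. (a, 0::'a))" by (rule linearI) simp_all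
  then have "linear l" unfolding l_def using linear_compose[OF _ L(1)] by (simp add: comp_def)
  moreover have "l a - l u \<le> f a + g u" for a u
  proof -
    have "L (a, u) = L ((a, 0) - (u, 0) + (u, u))" by simp
    also have "\<dots> = l a - l u"
      by (simp only: linear_add[OF L(1)] linear_diff[OF L(1)] L(3) l_def add_0_right)
    finally show ?thesis using L(2)[of "(a, u)"] by (simp add: \<Phi>_def)
  qed
  ultimately show ?thesis by blast
qed

lemma linear_le_on_sphere_imp_bounded_linear:
  fixes l :: "'a::real_normed_vector \<Rightarrow> real"
  assumes l: "linear l" and le: "\<And>a. norm a = 1 \<Longrightarrow> l a \<le> K"
  shows "bounded_linear l"
proof -
  have upper: "l v \<le> norm v * K" for v
  proof (cases "v = 0")
    case True then show ?thesis using linear_0[OF l] by simp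
  next
    case False
    then have "l v = norm v * l (v /\<^sub>R norm v)" by (simp add: linear_scale[OF l])
    also have "\<dots> \<le> norm v * K" using le[of "v /\<^sub>R norm v"] False by (simp add: mult_left_mono)
    finally show ?thesis .
  qed
  show ?thesis
  proof (rule bounded_linear_intro[of l K])
    show "l (x + y) = l x + l y" "l (r *\<^sub>R x) = r *\<^sub>R l x" for x y r
      by (simp_all add: linear_add[OF l] linear_scale[OF l])
    show "norm (l v) \<le> norm v * K" for v
      using upper[of v] upper[of "- v"] linear_neg[OF l, of v] by auto
  qed
qed

lemma half_onorm_power2_le:
  fixes \<phi> :: "'a::real_normed_vector \<Rightarrow> real"
  assumes \<phi>: "bounded_linear \<phi>" and le: "\<And>a. \<phi> a - (norm a)\<^sup>2 / 2 \<le> D"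
  shows "(onorm \<phi>)\<^sup>2 / 2 \<le> D"
proof -
  have lin: "linear \<phi>" using \<phi> by (rule bounded_linear.linear)
  have D: "0 \<le> D" using le[of 0] linear_0[OF lin] by simp
  define N where "N = onorm \<phi>"
  have "N\<^sup>2 / 2 \<le> D" if N: "0 < N"
  proof -
    have upper: "\<phi> y \<le> (D / N + N / 2) * norm y" for y
    proof (cases "y = 0")
      case True then show ?thesis using linear_0[OF lin] by simp
    next
      case False
      have "(N / norm y) * \<phi> y - N\<^sup>2 / 2 \<le> D"
        using le[of "(N / norm y) *\<^sub>R y"] N False by (simp add: linear_scale[OF lin])
      then show ?thesis using N False by (simp add: field_simps power2_eq_square)
    qed
    have "N \<le> D / N + N / 2" unfolding N_def
    proof (rule onorm_bound)
      show "0 \<le> D / onorm \<phi> + onorm \<phi> / 2" using D N unfolding N_def by simp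
      show "norm (\<phi> y) \<le> (D / onorm \<phi> + onorm \<phi> / 2) * norm y" for y
        using upper[of y] upper[of "- y"] linear_neg[OF lin] unfolding N_def by auto
    qed
    then show ?thesis using N by (simp add: field_simps power2_eq_square)
  qed
  moreover have "0 \<le> N" unfolding N_def by (rule onorm_pos_le[OF \<phi>])
  ultimately show ?thesis using D unfolding N_def by fastforce
qed

lemma SSDB_spaceD:
  assumes "SSDB_space s"
  shows "bilinear s" and "s x y = s y x" and "bounded_linear (\<lambda>x. s x b)"
    and "onorm (\<lambda>x. s x b) = norm b" and "bounded_linear f \<Longrightarrow> \<exists>b. f = (\<lambda>x. s x b)"
  using assms unfolding SSDB_space_def SSD_space_def by auto

lemma SSDB_abs_le_norm_power2:
  assumes "SSDB_space s"
  shows "\<bar>s y y\<bar> \<le> (norm y)\<^sup>2"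
  using onorm[OF SSDB_spaceD(3)[OF assms], of y y] SSDB_spaceD(4)[OF assms]
  by (simp add: power2_eq_square)

lemma SSDB_decomposition:
  assumes S: "SSDB_space s"
  shows "\<exists>b. (norm b)\<^sup>2 = s b b \<and> (norm (x - b))\<^sup>2 = - s (x - b) (x - b)"
proof -
  have bil: "bilinear s" and sym: "\<And>y z. s y z = s z y" using SSDB_spaceD[OF S] by blast+
  note s_simps = bilinear_lsub[OF bil] bilinear_rsub[OF bil] bilinear_lneg[OF bil] bilinear_rneg[OF bil]
  have expand: "s (x - y) (x - y) = s x x - 2 * s x y + s y y" for y
    using sym[of x y] by (simp add: s_simps)
  define f where "f = (\<lambda>a::'a. (norm a)\<^sup>2 / 2)"
  define g where "g = (\<lambda>u. (norm (x - u))\<^sup>2 / 2 - s x u + s x x / 2)"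
  have "convex_on UNIV f"
    unfolding f_def by (intro convex_on_cdiv convex_on_norm_power2) simp
  moreover have "convex_on UNIV g"
  proof -
    have "linear (\<lambda>u::'a. - u)" "linear (\<lambda>u. - s x u)"
      by (auto intro!: linearI simp: bilinear_radd[OF bil] bilinear_rmul[OF bil])
    then have "convex_on UNIV (\<lambda>u. (norm (- u + x))\<^sup>2)" "convex_on UNIV (\<lambda>u. - s x u + s x x / 2)"
      using convex_on_compose_affine[OF convex_on_norm_power2, of "\<lambda>u. - u" x]
        convex_on_compose_affine[of "\<lambda>t. t" "\<lambda>u. - s x u" "s x x / 2"]
      by (simp_all add: convex_on_ident)
    then have "convex_on UNIV (\<lambda>u. (norm (x - u))\<^sup>2 / 2)" "convex_on UNIV (\<lambda>u. - s x u + s x x / 2)"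
      using convex_on_cdiv[of 2 UNIV "\<lambda>u. (norm (- u + x))\<^sup>2"] by simp_all
    from convex_on_add[OF this] show ?thesis by (simp add: g_def algebra_simps)
  qed
  moreover have "0 \<le> f a + g a" for a
    using SSDB_abs_le_norm_power2[OF S, of a] SSDB_abs_le_norm_power2[OF S, of "x - a"] expand[of a]
    by (simp add: f_def g_def abs_le_iff)
  ultimately obtain l where l: "linear l" and sandwich: "\<And>a u. l a - l u \<le> f a + g u"
    using convex_sandwich by blast
  have "bounded_linear l"
  proof (rule linear_le_on_sphere_imp_bounded_linear[OF l])
    show "l a \<le> 1 / 2 + g 0" if "norm a = 1" for a
      using sandwich[of a 0] linear_0[OF l] that by (simp add: f_def)
  qed
  then obtain b where b: "l = (\<lambda>y. s y b)" using SSDB_spaceD(5)[OF S] by blast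
  have conj_b: "(norm b)\<^sup>2 / 2 \<le> s u b + g u" for u
  proof -
    have "s a b - (norm a)\<^sup>2 / 2 \<le> s u b + g u" for a
      using sandwich[of a u] by (simp add: b f_def)
    from half_onorm_power2_le[OF SSDB_spaceD(3)[OF S] this] show ?thesis
      by (simp add: SSDB_spaceD(4)[OF S])
  qed
  \<comment> \<open>substituting \<open>u = x - v\<close> exhibits the conjugate of \<open>v \<mapsto> \<parallel>v\<parallel>\<^sup>2 / 2\<close> at \<open>b - x\<close>\<close>
  have "s v (b - x) - (norm v)\<^sup>2 / 2 \<le> s x b - s x x / 2 - (norm b)\<^sup>2 / 2" for v
    using conj_b[of "x - v"] sym[of v x] by (simp add: g_def s_simps)
  from half_onorm_power2_le[OF SSDB_spaceD(3)[OF S] this]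
  have "(norm (b - x))\<^sup>2 / 2 \<le> s x b - s x x / 2 - (norm b)\<^sup>2 / 2"
    by (simp add: SSDB_spaceD(4)[OF S])
  then have "(norm b)\<^sup>2 + (norm (x - b))\<^sup>2 \<le> s b b - s (x - b) (x - b)"
    using expand[of b] sym[of x b] by (simp add: norm_minus_commute)
  with SSDB_abs_le_norm_power2[OF S, of b] SSDB_abs_le_norm_power2[OF S, of "x - b"]
  show ?thesis by (intro exI[of _ b]) (simp add: abs_le_iff)
qed

theorem mainTheorem15:
  fixes s :: "'a::banach \<Rightarrow> 'a \<Rightarrow> real"
  assumes "SSDB_space s"
  shows "{a + c | a c. a \<in> {x. g0 x = quad_form s x} \<and> c \<in> {x. g0 x = - quad_form s x}} = UNIV"
proof (intro set_eqI iffI)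
  fix x :: 'a
  obtain b where "(norm b)\<^sup>2 = s b b" "(norm (x - b))\<^sup>2 = - s (x - b) (x - b)"
    using SSDB_decomposition[OF assms] by blast
  then have "g0 b = quad_form s b" "g0 (x - b) = - quad_form s (x - b)"
    by (simp_all add: g0_def quad_form_def)
  moreover have "x = b + (x - b)" by simp
  ultimately show "x \<in> {a + c | a c. a \<in> {x. g0 x = quad_form s x} \<and> c \<in> {x. g0 x = - quad_form s x}}"
    by blast
qed simp

end
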